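(* Fix $\epsilon>0$, a graphlet $\mathsf{G}$ on $k$ vertices, and a simple undirected graph $G$. The output $\tilde{\mathsf{G}}(G)$ of Algorithm 1 (described in the context) is an unbiased estimator of $\mathsf{G}(G)$, i.e. $\mathbb{E}[\tilde{\mathsf{G}}(G)]=\mathsf{G}(G)$.
   Context: Let $G=(V,E)$ be a simple undirected graph with $V=\{v_1,\dots,v_n\}$; user $v_i$ holds $a_i=(a_{i,1},\dots,a_{i,n})$ with $a_{i,j}=1$ iff $\{v_i,v_j\}\in E$. A graphlet is a simple graph $\mathsf{G}=(\mathsf{V},\mathsf{E})$, $\mathsf{V}=\{u_1,\dots,u_k\}$; $\mathsf{G}(G)$ is the number of distinct (not necessarily induced) subgraphs of $G$ isomorphic to $\mathsf{G}$, and $A(\mathsf{G})$ the number of automorphisms of $\mathsf{G}$. Algorithm 1: (1) every user $v_i$ reports, independently for each $j\ne i$ and independently across users, a bit $\tilde a_{i,j}$ with $\Pr[\tilde a_{i,j}=1]=e^{\epsilon}/(1+e^{\epsilon})$ if $a_{i,j}=1$ and $1/(1+e^{\epsilon})$ if $a_{i,j}=0$; (2) the server sets $\hat a_{i,j}=\frac{e^{\epsilon}+1}{e^{\epsilon}-1}\tilde a_{i,j}-\frac{1}{e^{\epsilon}-1}$; (3) with $\mathcal{D}$ the set of tuples $\mathcal{W}=(v_{\ell_1},\dots,v_{\ell_k})$ of pairwise distinct nodes, it sets $\tilde W(\mathcal{W},\mathsf{G})=\prod_{\{u_i,u_j\}\in\mathsf{E},\,i<j}\hat a_{\ell_i,\ell_j}$;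 (4) it outputs $\tilde{\mathsf{G}}(G)=\big(\sum_{\mathcal{W}\in\mathcal{D}}\tilde W(\mathcal{W},\mathsf{G})\big)/A(\mathsf{G})$. *)

theory Defs
  imports "HOL-Probability.Probability"
begin

text \<open>A simple undirected graph on the vertex set {0..<n} (vertex v_(i+1) is i),
  given by a symmetric irreflexive adjacency relation supported on {0..<n}.\<close>
definition simple_graph :: "nat \<Rightarrow> (nat \<Rightarrow> nat \<Rightarrow> bool) \<Rightarrow> bool" where
  "simple_graph n E \<longleftrightarrow>
     (\<forall>i j. E i j \<longrightarrow> i < n \<and> j < n \<and> i \<noteq> j) \<and> (\<forall>i j. E i j \<longrightarrow> E j i)"

text \<open>Number of (not necessarily induced) subgraphs (S,T) of G isomorphic to the graphlet
  (vertices {0..<k}, adjacency F).\<close>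
definition graphlet_count ::
  "nat \<Rightarrow> (nat \<Rightarrow> nat \<Rightarrow> bool) \<Rightarrow> nat \<Rightarrow> (nat \<Rightarrow> nat \<Rightarrow> bool) \<Rightarrow> nat" where
  "graphlet_count n E k F = card {(S, T). S \<subseteq> {0..<n} \<and> T \<subseteq> {{i, j} | i j. E i j} \<and>
      (\<exists>f. bij_betw f {0..<k} S \<and> T = {{f i, f j} | i j. i < k \<and> j < k \<and> F i j})}"

definition num_aut :: "nat \<Rightarrow> (nat \<Rightarrow> nat \<Rightarrow> bool) \<Rightarrow> nat" where
  "num_aut k F = card {p \<in> {0..<k} \<rightarrow>\<^sub>E {0..<k}. bij_betw p {0..<k} {0..<k} \<and>
      (\<forall>i j. i < k \<longrightarrow> j < k \<longrightarrow> (F (p i) (p j) \<longleftrightarrow> F i j))}"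

definition rr_prob :: "real \<Rightarrow> bool \<Rightarrow> real" where
  "rr_prob eps b = (if b then exp eps / (1 + exp eps) else 1 / (1 + exp eps))"

definition reports_pmf :: "nat \<Rightarrow> (nat \<Rightarrow> nat \<Rightarrow> bool) \<Rightarrow> real \<Rightarrow> (nat \<times> nat \<Rightarrow> bool) pmf" where
  "reports_pmf n E eps = Pi_pmf {(i, j). i < n \<and> j < n \<and> i \<noteq> j} False
      (\<lambda>(i, j). bernoulli_pmf (rr_prob eps (E i j)))"

definition a_hat :: "real \<Rightarrow> (nat \<times> nat \<Rightarrow> bool) \<Rightarrow> nat \<Rightarrow> nat \<Rightarrow> real" where
  "a_hat eps r i j = (exp eps + 1) / (exp eps - 1) * (if r (i, j) then 1 else 0) - 1 / (exp eps - 1)"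

definition tuples :: "nat \<Rightarrow> nat \<Rightarrow> (nat \<Rightarrow> nat) set" where
  "tuples n k = {l \<in> {0..<k} \<rightarrow>\<^sub>E {0..<n}. inj_on l {0..<k}}"

definition W_tilde :: "real \<Rightarrow> nat \<Rightarrow> (nat \<Rightarrow> nat \<Rightarrow> bool) \<Rightarrow> (nat \<times> nat \<Rightarrow> bool) \<Rightarrow> (nat \<Rightarrow> nat) \<Rightarrow> real" where
  "W_tilde eps k F r l = (\<Prod>(i, j) \<in> {(i, j). i < j \<and> j < k \<and> F i j}. a_hat eps r (l i) (l j))"

definition estimator :: "nat \<Rightarrow> nat \<Rightarrow> (nat \<Rightarrow> nat \<Rightarrow> bool) \<Rightarrow> real \<Rightarrow> (nat \<times> nat \<Rightarrow> bool) \<Rightarrow> real" where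
  "estimator n k F eps r = (\<Sum>l \<in> tuples n k. W_tilde eps k F r l) / real (num_aut k F)"

end

theory Submission
  imports Defs
begin

text \<open>For a tuple of distinct nodes, the factors of \<open>W_tilde\<close> are debiased reports at
  distinct ordered pairs of nodes, hence independent, and each has expectation equal to the true
  adjacency bit. So the expectation of \<open>W_tilde\<close> is 1 if the tuple maps every edge of the
  graphlet onto an edge of G and 0 otherwise, and by linearity the expected sum counts these
  embeddings. Two embeddings yield the same copy of the graphlet in G exactly when they differ by
  an automorphism, so there are \<open>graphlet_count * num_aut\<close> of them.\<close>

lemma prod_of_bool_eq:
  "finite A \<Longrightarrow> (\<Prod>x\<in>A. of_bool (P x) :: 'b::comm_semiring_1) = of_bool (\<forall>x\<in>A. P x)"
  by (induction A rule: finite_induct) auto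

lemma card_eq_card_image_mult_fibres:
  assumes "finite A" and "\<And>y. y \<in> f ` A \<Longrightarrow> card {x \<in> A. f x = y} = c"
  shows "card A = card (f ` A) * c"
proof -
  have "card A = (\<Sum>y\<in>f ` A. card {x \<in> A. f x = y})"
    unfolding card_eq_sum by (rule sum.image_gen[OF assms(1)])
  also have "\<dots> = card (f ` A) * c"
    using assms(2) by simp
  finally show ?thesis .
qed

lemma expectation_prod_Pi_pmf_subset:
  fixes g :: "'a \<Rightarrow> 'b \<Rightarrow> real"
  assumes A: "finite A" and I: "I \<subseteq> A"
    and integrable: "\<And>i. i \<in> I \<Longrightarrow> integrable (measure_pmf (p i)) (g i)"
  shows "measure_pmf.expectation (Pi_pmf A dflt p) (\<lambda>\<omega>. \<Prod>i\<in>I. g i (\<omega> i))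
       = (\<Prod>i\<in>I. measure_pmf.expectation (p i) (g i))"
proof -
  note prob_space_Pi = measure_pmf.prob_space_axioms[of "Pi_pmf A dflt p"]
  have component: "map_pmf (\<lambda>\<omega>. \<omega> i) (Pi_pmf A dflt p) = p i" if "i \<in> I" for i
    using that I A by (auto simp: Pi_pmf_component)
  have "prob_space.indep_vars (measure_pmf (Pi_pmf A dflt p)) (\<lambda>_. count_space UNIV) (\<lambda>i \<omega>. \<omega> i) I"
    by (rule prob_space.indep_vars_subset[OF prob_space_Pi indep_vars_Pi_pmf[OF A] I])
  then have "prob_space.indep_vars (measure_pmf (Pi_pmf A dflt p)) (\<lambda>_. borel) (\<lambda>i \<omega>. g i (\<omega> i)) I"
    by (rule prob_space.indep_vars_compose2[OF prob_space_Pi]) simp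
  moreover have "integrable (measure_pmf (Pi_pmf A dflt p)) (\<lambda>\<omega>. g i (\<omega> i))" if "i \<in> I" for i
    using integrable[OF that] component[OF that] by (metis integrable_map_pmf_eq)
  ultimately have "measure_pmf.expectation (Pi_pmf A dflt p) (\<lambda>\<omega>. \<Prod>i\<in>I. g i (\<omega> i))
      = (\<Prod>i\<in>I. measure_pmf.expectation (Pi_pmf A dflt p) (\<lambda>\<omega>. g i (\<omega> i)))"
    using finite_subset[OF I A] by (intro prob_space.indep_vars_lebesgue_integral[OF prob_space_Pi])
  also have "\<dots> = (\<Prod>i\<in>I. measure_pmf.expectation (p i) (g i))"
    by (intro prod.cong refl) (metis component integral_map_pmf)
  finally show ?thesis .
qed

text \<open>The affine map sending the report probabilities \<open>rr_prob eps False\<close> and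
  \<open>rr_prob eps True\<close> to 0 and 1.\<close>
definition debias :: "real \<Rightarrow> bool \<Rightarrow> real" where
  "debias eps v = (exp eps + 1) / (exp eps - 1) * of_bool v - 1 / (exp eps - 1)"

lemma a_hat_eq_debias: "a_hat eps r i j = debias eps (r (i, j))"
  by (simp add: a_hat_def debias_def)

lemma expectation_debias_rr_prob:
  assumes "eps \<noteq> 0"
  shows "measure_pmf.expectation (bernoulli_pmf (rr_prob eps b)) (debias eps) = of_bool b"
proof -
  define e where "e = exp eps"
  have e: "e > 0" "e \<noteq> 1"
    using assms by (simp_all add: e_def)
  then have "0 \<le> rr_prob eps b" "rr_prob eps b \<le> 1"
    by (auto simp: rr_prob_def simp flip: e_def)
  then have "measure_pmf.expectation (bernoulli_pmf (rr_prob eps b)) (debias eps)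
      = (e + 1) / (e - 1) * rr_prob eps b - 1 / (e - 1)"
    by (simp add: debias_def e_def algebra_simps flip: add_divide_distrib)
  also have "\<dots> = of_bool b"
    using e by (cases b) (simp_all add: rr_prob_def divide_simps flip: e_def, simp_all add: algebra_simps)
  finally show ?thesis .
qed

definition hom_on ::
  "nat \<Rightarrow> (nat \<Rightarrow> nat \<Rightarrow> bool) \<Rightarrow> (nat \<Rightarrow> nat \<Rightarrow> bool) \<Rightarrow> (nat \<Rightarrow> nat) \<Rightarrow> bool" where
  "hom_on k F E l \<longleftrightarrow> (\<forall>i j. i < k \<longrightarrow> j < k \<longrightarrow> F i j \<longrightarrow> E (l i) (l j))"

definition ordered_edges :: "nat \<Rightarrow> (nat \<Rightarrow> nat \<Rightarrow> bool) \<Rightarrow> (nat \<times> nat) set" where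
  "ordered_edges k F = {(i, j). i < j \<and> j < k \<and> F i j}"

definition embeddings ::
  "nat \<Rightarrow> (nat \<Rightarrow> nat \<Rightarrow> bool) \<Rightarrow> nat \<Rightarrow> (nat \<Rightarrow> nat \<Rightarrow> bool) \<Rightarrow> (nat \<Rightarrow> nat) set" where
  "embeddings n E k F = {l \<in> tuples n k. hom_on k F E l}"

definition edge_image :: "nat \<Rightarrow> (nat \<Rightarrow> nat \<Rightarrow> bool) \<Rightarrow> (nat \<Rightarrow> nat) \<Rightarrow> nat set set" where
  "edge_image k F l = {{l i, l j} | i j. i < k \<and> j < k \<and> F i j}"

definition copy_of :: "nat \<Rightarrow> (nat \<Rightarrow> nat \<Rightarrow> bool) \<Rightarrow> (nat \<Rightarrow> nat) \<Rightarrow> nat set \<times> nat set set" where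
  "copy_of k F l = (l ` {0..<k}, edge_image k F l)"

definition automorphisms :: "nat \<Rightarrow> (nat \<Rightarrow> nat \<Rightarrow> bool) \<Rightarrow> (nat \<Rightarrow> nat) set" where
  "automorphisms k F = {p \<in> {0..<k} \<rightarrow>\<^sub>E {0..<k}. bij_betw p {0..<k} {0..<k} \<and>
      (\<forall>i j. i < k \<longrightarrow> j < k \<longrightarrow> (F (p i) (p j) \<longleftrightarrow> F i j))}"

lemma num_aut_eq_card_automorphisms: "num_aut k F = card (automorphisms k F)"
  by (simp add: num_aut_def automorphisms_def)

lemma num_aut_pos: "num_aut k F > 0"
proof -
  have "restrict id {0..<k} \<in> automorphisms k F"
    by (auto simp: automorphisms_def bij_betw_def inj_on_def)
  moreover have "finite (automorphisms k F)"
    by (rule finite_subset[of _ "{0..<k} \<rightarrow>\<^sub>E {0..<k}"]) (auto simp: automorphisms_def finite_PiE)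
  ultimately show ?thesis
    unfolding num_aut_eq_card_automorphisms using card_gt_0_iff by blast
qed

lemma simple_graph_symp: "simple_graph n E \<Longrightarrow> symp E"
  by (auto simp: simple_graph_def symp_def)

lemma finite_tuples: "finite (tuples n k)"
  by (rule finite_subset[of _ "{0..<k} \<rightarrow>\<^sub>E {0..<n}"]) (auto simp: tuples_def finite_PiE)

lemma finite_ordered_edges: "finite (ordered_edges k F)"
  by (rule finite_subset[of _ "{0..<k} \<times> {0..<k}"]) (auto simp: ordered_edges_def)

lemma finite_set_reports_pmf: "finite (set_pmf (reports_pmf n E eps))"
proof -
  have "finite {(i, j). i < n \<and> j < n \<and> i \<noteq> j}"
    by (rule finite_subset[of _ "{0..<n} \<times> {0..<n}"]) auto
  then show ?thesis
    by (simp add: reports_pmf_def set_Pi_pmf finite_PiE_dflt)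
qed

lemma mem_edge_imageI: "i < k \<Longrightarrow> j < k \<Longrightarrow> F i j \<Longrightarrow> {l i, l j} \<in> edge_image k F l"
  unfolding edge_image_def by blast

lemma mem_edge_image_iff:
  assumes "symp F" and "inj_on l {0..<k}" and "i < k" "j < k"
  shows "{l i, l j} \<in> edge_image k F l \<longleftrightarrow> F i j"
proof
  assume "{l i, l j} \<in> edge_image k F l"
  then obtain a b where "a < k" "b < k" "F a b" "{l i, l j} = {l a, l b}"
    by (auto simp: edge_image_def)
  with assms(2-4) have "{i, j} = {a, b}"
    by (auto simp: doubleton_eq_iff inj_on_def)
  with \<open>F a b\<close> \<open>symp F\<close> show "F i j"
    by (auto simp: doubleton_eq_iff dest: sympD)
qed (use assms mem_edge_imageI in auto)

lemma hom_on_iff_ordered_edges: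
  assumes "simple_graph k F" and "symp E"
  shows "hom_on k F E l \<longleftrightarrow> (\<forall>(i, j) \<in> ordered_edges k F. E (l i) (l j))"
proof -
  have "E (l i) (l j)" if ordered: "\<forall>(i, j) \<in> ordered_edges k F. E (l i) (l j)"
    and "i < k" "j < k" "F i j" for i j
  proof -
    have "F j i" "i \<noteq> j"
      using assms(1) \<open>F i j\<close> by (auto simp: simple_graph_def)
    show ?thesis
    proof (cases "i < j")
      case True
      then show ?thesis
        using ordered \<open>j < k\<close> \<open>F i j\<close> by (auto simp: ordered_edges_def)
    next
      case False
      with \<open>i \<noteq> j\<close> \<open>i < k\<close> \<open>F j i\<close> ordered have "E (l j) (l i)"
        by (auto simp: ordered_edges_def)
      then show ?thesis
        using \<open>symp E\<close> by (rule sympD[rotated])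
    qed
  qed
  then show ?thesis
    by (auto simp: hom_on_def ordered_edges_def)
qed

lemma expectation_W_tilde:
  assumes "eps \<noteq> 0" and "simple_graph k F" and "symp E" and l: "l \<in> tuples n k"
  shows "measure_pmf.expectation (reports_pmf n E eps) (\<lambda>r. W_tilde eps k F r l)
       = of_bool (hom_on k F E l)"
proof -
  define P where "P = {(a, b). a < n \<and> b < n \<and> a \<noteq> b}"
  define pair where "pair = (\<lambda>(i, j). (l i, l j))"
  have "inj_on l {0..<k}" "\<And>i. i < k \<Longrightarrow> l i < n"
    using l by (auto simp: tuples_def)
  then have inj: "inj_on pair (ordered_edges k F)" and sub: "pair ` ordered_edges k F \<subseteq> P"
    by (auto simp: inj_on_def pair_def ordered_edges_def P_def) (use less_trans in fastforce)
  have "finite P"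
    by (rule finite_subset[of _ "{0..<n} \<times> {0..<n}"]) (auto simp: P_def)
  have W: "W_tilde eps k F r l = (\<Prod>x\<in>pair ` ordered_edges k F. debias eps (r x))" for r
    by (simp add: prod.reindex[OF inj] W_tilde_def a_hat_eq_debias,
        simp add: pair_def ordered_edges_def case_prod_beta)
  have "measure_pmf.expectation (reports_pmf n E eps) (\<lambda>r. W_tilde eps k F r l)
      = (\<Prod>x\<in>pair ` ordered_edges k F.
          measure_pmf.expectation (bernoulli_pmf (rr_prob eps (E (fst x) (snd x)))) (debias eps))"
    unfolding W reports_pmf_def P_def[symmetric]
    using expectation_prod_Pi_pmf_subset[OF \<open>finite P\<close> sub, where g = "\<lambda>_. debias eps"]
    by (simp add: integrable_measure_pmf_finite case_prod_beta)
  also have "\<dots> = (\<Prod>x\<in>ordered_edges k F. of_bool (E (l (fst x)) (l (snd x))))"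
    using \<open>eps \<noteq> 0\<close>
    by (simp add: prod.reindex[OF inj] expectation_debias_rr_prob, simp add: pair_def case_prod_beta)
  also have "\<dots> = of_bool (hom_on k F E l)"
    by (simp add: prod_of_bool_eq finite_ordered_edges hom_on_iff_ordered_edges[OF assms(2,3)]
        case_prod_beta)
  finally show ?thesis .
qed

lemma edge_image_comp_automorphism:
  assumes "p \<in> automorphisms k F"
  shows "edge_image k F (l \<circ> p) = edge_image k F l"
proof -
  have p_onto: "p ` {0..<k} = {0..<k}"
    and p_hom: "\<And>i j. i < k \<Longrightarrow> j < k \<Longrightarrow> F (p i) (p j) \<longleftrightarrow> F i j"
    using assms by (auto simp: automorphisms_def bij_betw_def)
  show ?thesis
  proof (intro equalityI subsetI)
    fix e assume "e \<in> edge_image k F (l \<circ> p)"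
    then obtain i j where e: "e = {l (p i), l (p j)}" and ij: "i < k" "j < k" "F i j"
      by (auto simp: edge_image_def)
    have "p i < k" "p j < k"
      using p_onto ij by auto
    with ij show "e \<in> edge_image k F l"
      unfolding e by (intro mem_edge_imageI) (simp_all add: p_hom)
  next
    fix e assume "e \<in> edge_image k F l"
    then obtain a b where e: "e = {l a, l b}" and ab: "a < k" "b < k" "F a b"
      by (auto simp: edge_image_def)
    have "a \<in> p ` {0..<k}" "b \<in> p ` {0..<k}"
      using ab(1,2) p_onto by auto
    then obtain i j where ij: "i < k" "j < k" and "a = p i" "b = p j"
      by auto
    with ab have "F i j"
      using p_hom by simp
    with ij show "e \<in> edge_image k F (l \<circ> p)"
      unfolding e \<open>a = p i\<close> \<open>b = p j\<close> using mem_edge_imageI[of i k j F "l \<circ> p"] by simp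
  qed
qed

lemma relabel_embedding_by_automorphism:
  assumes p: "p \<in> automorphisms k F" and l: "l \<in> embeddings n E k F"
  shows "restrict (l \<circ> p) {0..<k} \<in> embeddings n E k F"
    and "copy_of k F (restrict (l \<circ> p) {0..<k}) = copy_of k F l"
proof -
  have p_onto: "p ` {0..<k} = {0..<k}" and p_inj: "inj_on p {0..<k}"
    and p_hom: "\<And>i j. i < k \<Longrightarrow> j < k \<Longrightarrow> F (p i) (p j) \<longleftrightarrow> F i j"
    using p by (auto simp: automorphisms_def bij_betw_def)
  have p_range: "p i < k" if "i < k" for i
    using p_onto that by auto
  have l_range: "l \<in> {0..<k} \<rightarrow>\<^sub>E {0..<n}" and l_inj: "inj_on l {0..<k}" and l_hom: "hom_on k F E l"
    using l by (auto simp: embeddings_def tuples_def)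
  have "inj_on (l \<circ> p) {0..<k}"
    using p_inj l_inj p_onto by (simp add: comp_inj_on)
  moreover have "restrict (l \<circ> p) {0..<k} \<in> {0..<k} \<rightarrow>\<^sub>E {0..<n}"
    using l_range p_range by auto
  moreover have "hom_on k F E (restrict (l \<circ> p) {0..<k})"
    using l_hom p_hom p_range by (simp add: hom_on_def)
  ultimately show "restrict (l \<circ> p) {0..<k} \<in> embeddings n E k F"
    by (simp add: embeddings_def tuples_def)
  have "edge_image k F (restrict (l \<circ> p) {0..<k}) = edge_image k F (l \<circ> p)"
    by (auto simp: edge_image_def)
  moreover have "restrict (l \<circ> p) {0..<k} ` {0..<k} = l ` {0..<k}"
    using p_onto by (metis image_comp image_restrict_eq)
  ultimately show "copy_of k F (restrict (l \<circ> p) {0..<k}) = copy_of k F l"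
    using edge_image_comp_automorphism[OF p] by (simp add: copy_of_def)
qed

lemma automorphism_between_same_copy:
  assumes "symp F" and l: "l \<in> tuples n k" and l0: "l0 \<in> tuples n k"
    and same: "copy_of k F l = copy_of k F l0"
  obtains p where "p \<in> automorphisms k F" and "l = restrict (l0 \<circ> p) {0..<k}"
proof -
  let ?K = "{0..<k}"
  have l_range: "l \<in> ?K \<rightarrow>\<^sub>E {0..<n}" and l_inj: "inj_on l ?K" and l0_inj: "inj_on l0 ?K"
    using l l0 by (auto simp: tuples_def)
  have same_image: "l ` ?K = l0 ` ?K" and same_edges: "edge_image k F l = edge_image k F l0"
    using same by (auto simp: copy_of_def)
  define p where "p = restrict (\<lambda>i. inv_into ?K l0 (l i)) ?K"
  have p_range: "p i \<in> ?K" and l0_p: "l0 (p i) = l i" if "i \<in> ?K" for i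
  proof -
    have "l i \<in> l0 ` ?K"
      using that same_image by blast
    from inv_into_into[OF this] f_inv_into_f[OF this] that
    show "p i \<in> ?K" "l0 (p i) = l i"
      by (simp_all add: p_def)
  qed
  have p_inj: "inj_on p ?K"
    using l_inj l0_p by (metis inj_on_def)
  have p_onto: "p ` ?K = ?K"
    using p_range p_inj by (intro endo_inj_surj) auto
  have "F (p i) (p j) \<longleftrightarrow> F i j" if "i < k" "j < k" for i j
  proof -
    have "F i j \<longleftrightarrow> {l i, l j} \<in> edge_image k F l"
      using mem_edge_image_iff[OF \<open>symp F\<close> l_inj] that by simp
    also have "\<dots> \<longleftrightarrow> {l0 (p i), l0 (p j)} \<in> edge_image k F l0"
      using same_edges l0_p that by simp
    also have "\<dots> \<longleftrightarrow> F (p i) (p j)"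
      using mem_edge_image_iff[OF \<open>symp F\<close> l0_inj] p_range that by simp
    finally show ?thesis
      by simp
  qed
  then have "p \<in> automorphisms k F"
    using p_range p_inj p_onto by (auto simp: automorphisms_def bij_betw_def p_def)
  moreover have "l = restrict (l0 \<circ> p) ?K"
    using l_range l0_p by (intro PiE_ext[OF l_range]) auto
  ultimately show ?thesis
    using that by blast
qed

lemma graphlet_count_eq_card_copies:
  assumes "symp E"
  shows "graphlet_count n E k F = card (copy_of k F ` embeddings n E k F)"
proof -
  let ?K = "{0..<k}"
  have "{(S, T). S \<subseteq> {0..<n} \<and> T \<subseteq> {{i, j} | i j. E i j} \<and>
      (\<exists>f. bij_betw f ?K S \<and> T = {{f i, f j} | i j. i < k \<and> j < k \<and> F i j})}
    = copy_of k F ` embeddings n E k F" (is "?copies = _")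
  proof (intro equalityI subsetI)
    fix c assume "c \<in> ?copies"
    then obtain S T f where c: "c = (S, T)" and S: "S \<subseteq> {0..<n}" and T: "T \<subseteq> {{i, j} | i j. E i j}"
      and f: "bij_betw f ?K S" and T_eq: "T = {{f i, f j} | i j. i < k \<and> j < k \<and> F i j}"
      by blast
    define l where "l = restrict f ?K"
    have "E (l i) (l j)" if "i < k" "j < k" "F i j" for i j
    proof -
      have "{f i, f j} \<in> T"
        using T_eq that by blast
      then obtain a b where "E a b" "{f i, f j} = {a, b}"
        using T by blast
      then show ?thesis
        using \<open>symp E\<close> that by (auto simp: l_def doubleton_eq_iff dest: sympD)
    qed
    then have "l \<in> embeddings n E k F"
      using f S by (auto simp: embeddings_def tuples_def hom_on_def l_def bij_betw_def inj_on_def)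
    moreover have "copy_of k F l = c"
      using f by (auto simp: c T_eq copy_of_def edge_image_def l_def bij_betw_def)
    ultimately show "c \<in> copy_of k F ` embeddings n E k F"
      by blast
  next
    fix c assume "c \<in> copy_of k F ` embeddings n E k F"
    then obtain l where l: "l \<in> embeddings n E k F" and c: "c = copy_of k F l"
      by blast
    then have "l ` ?K \<subseteq> {0..<n}" and "bij_betw l ?K (l ` ?K)"
      by (auto simp: embeddings_def tuples_def bij_betw_def)
    moreover have "edge_image k F l \<subseteq> {{i, j} | i j. E i j}"
      using l by (auto simp: embeddings_def hom_on_def edge_image_def)
    ultimately show "c \<in> ?copies"
      by (auto simp: c copy_of_def edge_image_def)
  qed
  then show ?thesis
    by (simp add: graphlet_count_def)
qed

lemma card_embeddings_with_copy:
  assumes "symp F" and l0: "l0 \<in> embeddings n E k F"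
  shows "card {l \<in> embeddings n E k F. copy_of k F l = copy_of k F l0} = num_aut k F"
proof -
  let ?K = "{0..<k}"
  define relabel where "relabel p = restrict (l0 \<circ> p) ?K" for p
  have "inj_on relabel (automorphisms k F)"
  proof (rule inj_onI)
    fix p q assume p: "p \<in> automorphisms k F" and q: "q \<in> automorphisms k F"
      and "relabel p = relabel q"
    then have "l0 (p i) = l0 (q i)" if "i \<in> ?K" for i
      using that by (metis comp_apply relabel_def restrict_apply')
    moreover have "inj_on l0 ?K"
      using l0 by (simp add: embeddings_def tuples_def)
    moreover have p_range: "p \<in> ?K \<rightarrow>\<^sub>E ?K" and q_range: "q \<in> ?K \<rightarrow>\<^sub>E ?K"
      using p q by (simp_all add: automorphisms_def)
    ultimately show "p = q"
      by (intro PiE_ext[OF p_range q_range]) (meson PiE_mem inj_onD)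
  qed
  moreover have "relabel ` automorphisms k F = {l \<in> embeddings n E k F. copy_of k F l = copy_of k F l0}"
  proof (intro equalityI subsetI)
    fix l assume "l \<in> relabel ` automorphisms k F"
    then show "l \<in> {l \<in> embeddings n E k F. copy_of k F l = copy_of k F l0}"
      using relabel_embedding_by_automorphism[OF _ l0] by (auto simp: relabel_def)
  next
    fix l assume "l \<in> {l \<in> embeddings n E k F. copy_of k F l = copy_of k F l0}"
    with l0 have "l \<in> tuples n k" "l0 \<in> tuples n k" "copy_of k F l = copy_of k F l0"
      by (auto simp: embeddings_def)
    then obtain p where "p \<in> automorphisms k F" "l = relabel p"
      unfolding relabel_def by (rule automorphism_between_same_copy[OF \<open>symp F\<close>])
    then show "l \<in> relabel ` automorphisms k F"
      by blast
  qed
  ultimately show ?thesis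
    by (metis bij_betw_imageI bij_betw_same_card num_aut_eq_card_automorphisms)
qed

lemma card_embeddings:
  assumes "symp F" and "symp E"
  shows "card (embeddings n E k F) = graphlet_count n E k F * num_aut k F"
proof -
  have "finite (embeddings n E k F)"
    using finite_tuples by (simp add: embeddings_def)
  then show ?thesis
    using card_embeddings_with_copy[OF \<open>symp F\<close>] graphlet_count_eq_card_copies[OF \<open>symp E\<close>]
    by (auto intro: card_eq_card_image_mult_fibres)
qed

theorem lemma2:
  fixes eps :: real and n k :: nat and E F :: "nat \<Rightarrow> nat \<Rightarrow> bool"
  assumes "eps > 0"
    and "simple_graph n E"
    and "simple_graph k F"
  shows "measure_pmf.expectation (reports_pmf n E eps) (estimator n k F eps)
           = real (graphlet_count n E k F)"
proof -
  have "measure_pmf.expectation (reports_pmf n E eps) (estimator n k F eps)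
      = measure_pmf.expectation (reports_pmf n E eps) (\<lambda>r. \<Sum>l\<in>tuples n k. W_tilde eps k F r l)
        / real (num_aut k F)"
    unfolding estimator_def by (rule integral_divide_zero)
  also have "measure_pmf.expectation (reports_pmf n E eps) (\<lambda>r. \<Sum>l\<in>tuples n k. W_tilde eps k F r l)
      = (\<Sum>l\<in>tuples n k. measure_pmf.expectation (reports_pmf n E eps) (\<lambda>r. W_tilde eps k F r l))"
    by (intro Bochner_Integration.integral_sum integrable_measure_pmf_finite finite_set_reports_pmf)
  also have "\<dots> = (\<Sum>l\<in>tuples n k. of_bool (hom_on k F E l))"
    using expectation_W_tilde assms simple_graph_symp[OF assms(2)] by simp
  also have "\<dots> = real (card (embeddings n E k F))"
    by (simp add: finite_tuples embeddings_def Collect_conj_eq)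
  also have "\<dots> = real (graphlet_count n E k F) * real (num_aut k F)"
    using assms(2,3) by (simp add: card_embeddings simple_graph_symp)
  finally show ?thesis
    using num_aut_pos[of k F] by simp
qed

end
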